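(* Let $d\ge 1$ be an integer and, for $t\ge 0$, let $N_t$ be the number of vertices of the $t$-iterated line digraph $L^t(CK(d,4))$. Then $$N_t=\alpha\left(\frac{d-1+\sqrt{d^2-2d+5}}{2}\right)^t+\beta\left(\frac{d-1-\sqrt{d^2-2d+5}}{2}\right)^t,$$ where $\alpha=\frac12 d(d+1)\left(d^2-d+1+\frac{d^3-2d^2+4d-1}{\sqrt{d^2-2d+5}}\right)$ and $\beta=\frac12 d(d+1)\left(d^2-d+1-\frac{d^3-2d^2+4d-1}{\sqrt{d^2-2d+5}}\right)$. Moreover, if $d=2$, then $N_0=18$, $N_1=30$ and $N_t=N_{t-1}+N_{t-2}$ for all $t\ge 2$.
   Context: Let $\Sigma=\{0,1,\dots,d\}$. The cyclic Kautz digraph $CK(d,\ell)$ has as vertices all sequences $a_1\ldots a_\ell\in\Sigma^\ell$ with $a_i\neq a_{i+1}$ for $1\le i\le \ell-1$ and $a_1\neq a_\ell$, with an arc from $a_1\ldots a_\ell$ to $b_1\ldots b_\ell$ iff both are vertices and $b_i=a_{i+1}$ for $1\le i\le\ell-1$. The line digraph $L(G)$ of a digraph $G$ has as vertices the arcs of $G$, with an arc from $(u,v)$ to $(v',w)$ iff $v'=v$. $L^0(G)=G$ and $L^t(G)=L(L^{t-1}(G))$. *)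

theory Defs
  imports Complex_Main
begin

text \<open>Vertices of iterated line digraphs: a base vertex, or an arc (u,v) of the previous digraph.
  This uniform type allows iterating the line digraph construction.\<close>
datatype 'a vert = Base 'a | Arc "'a vert" "'a vert"

type_synonym 'a digraph = "'a set \<times> ('a \<times> 'a) set"

definition line_digraph :: "'a vert digraph \<Rightarrow> 'a vert digraph" where
  "line_digraph G =
     ({Arc u v | u v. (u, v) \<in> snd G},
      {(Arc u v, Arc v' w) | u v v' w. (u, v) \<in> snd G \<and> (v', w) \<in> snd G \<and> v' = v})"

definition ck_vertices :: "nat \<Rightarrow> nat \<Rightarrow> nat list set" where
  "ck_vertices d l = {xs. length xs = l \<and> set xs \<subseteq> {0..d}
       \<and> (\<forall>i. Suc i < l \<longrightarrow> xs ! i \<noteq> xs ! Suc i) \<and> xs ! 0 \<noteq> xs ! (l - 1)}"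

definition cyclic_kautz :: "nat \<Rightarrow> nat \<Rightarrow> nat list vert digraph" where
  "cyclic_kautz d l =
     (Base ` ck_vertices d l,
      {(Base a, Base b) | a b. a \<in> ck_vertices d l \<and> b \<in> ck_vertices d l
          \<and> (\<forall>i. Suc i < l \<longrightarrow> b ! i = a ! Suc i)})"

definition N_ck4 :: "nat \<Rightarrow> nat \<Rightarrow> nat" where
  "N_ck4 d t = card (fst ((line_digraph ^^ t) (cyclic_kautz d 4)))"

end

theory Submission
  imports Defs
begin

text \<open>Call a vertex a1 a2 a3 a4 of CK(d,4) special if a2 = a4. Its out-neighbours are
  a2 a3 a4 x with x \<notin> {a2, a4}; exactly one of them (x = a3) is special, and d - 1 or d - 2
  of them are not, according as the vertex itself is special or not. Giving each arc of a digraph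
  the type of its head preserves such a pattern of typed out-degrees in the line digraph, so the
  numbers (a, b) of special and non-special vertices evolve by (a, b) \<mapsto> (a + b, (d-1) a + (d-2) b).
  This matrix has trace d - 1 and determinant -1, whence N (t+2) = (d-1) N (t+1) + N t, and the
  closed form is the solution of this recurrence with the initial values N 0 and N 1.\<close>

definition out_type_regular :: "('a \<Rightarrow> 'b) \<Rightarrow> ('b \<Rightarrow> 'b \<Rightarrow> nat) \<Rightarrow> 'a digraph \<Rightarrow> bool" where
  "out_type_regular ty M G \<longleftrightarrow> finite (fst G) \<and> snd G \<subseteq> fst G \<times> fst G
     \<and> (\<forall>v\<in>fst G. \<forall>p. card {w. (v, w) \<in> snd G \<and> ty w = p} = M (ty v) p)"

fun head_type :: "('a vert \<Rightarrow> 'b) \<Rightarrow> 'a vert \<Rightarrow> 'b" where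
  "head_type ty (Arc u v) = ty v"
| "head_type ty (Base a) = ty (Base a)" \<comment> \<open>irrelevant: line digraphs have no base vertices\<close>

definition type_count :: "('a \<Rightarrow> 'b) \<Rightarrow> 'a set \<Rightarrow> 'b \<Rightarrow> nat" where
  "type_count ty V p = card {v \<in> V. ty v = p}"

definition type_step :: "('b::finite \<Rightarrow> 'b \<Rightarrow> nat) \<Rightarrow> ('b \<Rightarrow> nat) \<Rightarrow> 'b \<Rightarrow> nat" where
  "type_step M c p = (\<Sum>q\<in>UNIV. M q p * c q)"

lemma sum_by_type:
  fixes ty :: "'a \<Rightarrow> 'b::finite"
  assumes "finite V"
  shows "(\<Sum>v\<in>V. f (ty v)) = (\<Sum>q\<in>UNIV. f q * type_count ty V q)"
proof -
  have "(\<Sum>v\<in>V. f (ty v)) = (\<Sum>q\<in>UNIV. \<Sum>v\<in>{v \<in> V. ty v = q}. f (ty v))"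
    by (rule sum.group[OF assms finite_UNIV subset_UNIV, symmetric])
  also have "\<dots> = (\<Sum>q\<in>UNIV. \<Sum>v\<in>{v \<in> V. ty v = q}. f q)"
    by (intro sum.cong refl) auto
  also have "\<dots> = (\<Sum>q\<in>UNIV. f q * type_count ty V q)"
    by (simp add: type_count_def mult.commute)
  finally show ?thesis .
qed

lemma card_eq_sum_type_count:
  fixes ty :: "'a \<Rightarrow> 'b::finite"
  assumes "finite V"
  shows "card V = (\<Sum>q\<in>UNIV. type_count ty V q)"
  using sum_by_type[OF assms, of "\<lambda>_. 1::nat" ty] by simp

lemma fst_line_digraph: "fst (line_digraph G) = case_prod Arc ` snd G"
  unfolding line_digraph_def by auto

lemma snd_line_digraph:
  "snd (line_digraph G) = {(Arc u v, Arc v w) | u v w. (u, v) \<in> snd G \<and> (v, w) \<in> snd G}"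
  unfolding line_digraph_def by auto

lemma card_arcs_by_tail:
  assumes "finite V" "E \<subseteq> V \<times> V"
  shows "card {(u, v) \<in> E. P v} = (\<Sum>u\<in>V. card {w. (u, w) \<in> E \<and> P w})"
proof -
  have "{(u, v) \<in> E. P v} = Sigma V (\<lambda>u. {w. (u, w) \<in> E \<and> P w})"
    using assms(2) by auto
  moreover have "finite {w. (u, w) \<in> E \<and> P w}" for u
    using assms by (auto intro: finite_subset[of _ V])
  ultimately show ?thesis using assms(1) by (simp add: card_SigmaI)
qed

lemma out_type_regular_line_digraph:
  assumes "out_type_regular ty M G"
  shows "out_type_regular (head_type ty) M (line_digraph G)"
proof -
  from assms have fin: "finite (fst G)" and sub: "snd G \<subseteq> fst G \<times> fst G"
    and out: "\<And>v p. v \<in> fst G \<Longrightarrow> card {w. (v, w) \<in> snd G \<and> ty w = p} = M (ty v) p"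
    unfolding out_type_regular_def by auto
  have "finite (snd G)" using fin sub by (meson finite_SigmaI finite_subset)
  moreover have "snd (line_digraph G) \<subseteq> fst (line_digraph G) \<times> fst (line_digraph G)"
    unfolding fst_line_digraph snd_line_digraph by auto
  moreover have "card {y. (Arc u v, y) \<in> snd (line_digraph G) \<and> head_type ty y = p}
      = M (ty v) p" if "(u, v) \<in> snd G" for u v p
  proof -
    have "{y. (Arc u v, y) \<in> snd (line_digraph G) \<and> head_type ty y = p}
        = Arc v ` {w. (v, w) \<in> snd G \<and> ty w = p}"
      unfolding snd_line_digraph using that by auto
    then show ?thesis using out[of v p] that sub by (auto simp: card_image inj_on_def)
  qed
  ultimately show ?thesis
    unfolding out_type_regular_def by (auto simp: fst_line_digraph)
qed

lemma type_count_line_digraph: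
  fixes ty :: "'a vert \<Rightarrow> 'b::finite"
  assumes "out_type_regular ty M G"
  shows "type_count (head_type ty) (fst (line_digraph G)) = type_step M (type_count ty (fst G))"
proof
  fix p
  from assms have fin: "finite (fst G)" and sub: "snd G \<subseteq> fst G \<times> fst G"
    and out: "\<And>v. v \<in> fst G \<Longrightarrow> card {w. (v, w) \<in> snd G \<and> ty w = p} = M (ty v) p"
    unfolding out_type_regular_def by auto
  have "{x \<in> fst (line_digraph G). head_type ty x = p} = case_prod Arc ` {(u, v) \<in> snd G. ty v = p}"
    unfolding fst_line_digraph by auto
  then have "type_count (head_type ty) (fst (line_digraph G)) p = card {(u, v) \<in> snd G. ty v = p}"
    by (simp add: type_count_def card_image inj_on_def)
  also have "\<dots> = (\<Sum>u\<in>fst G. M (ty u) p)"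
    using card_arcs_by_tail[OF fin sub] out by simp
  also have "\<dots> = type_step M (type_count ty (fst G)) p"
    using sum_by_type[OF fin] by (simp add: type_step_def mult.commute)
  finally show "type_count (head_type ty) (fst (line_digraph G)) p = type_step M (type_count ty (fst G)) p" .
qed

lemma type_count_iterated_line_digraph:
  fixes ty :: "'a vert \<Rightarrow> 'b::finite"
  assumes "out_type_regular ty M G"
  shows "out_type_regular ((head_type ^^ t) ty) M ((line_digraph ^^ t) G)
    \<and> type_count ((head_type ^^ t) ty) (fst ((line_digraph ^^ t) G))
        = (type_step M ^^ t) (type_count ty (fst G))"
proof (induction t)
  case 0
  then show ?case using assms by simp
next
  case (Suc t)
  then show ?case
    using out_type_regular_line_digraph type_count_line_digraph by fastforce
qed

lemma card_iterated_line_digraph: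
  fixes ty :: "'a vert \<Rightarrow> 'b::finite"
  assumes "out_type_regular ty M G"
  shows "card (fst ((line_digraph ^^ t) G)) = (\<Sum>q\<in>UNIV. (type_step M ^^ t) (type_count ty (fst G)) q)"
  using type_count_iterated_line_digraph[OF assms, of t] card_eq_sum_type_count
  unfolding out_type_regular_def by metis

lemma second_order_recurrence_closed_form:
  fixes s :: "nat \<Rightarrow> 'a::comm_semiring_1"
  assumes rec: "\<And>t. s (Suc (Suc t)) = p * s (Suc t) + q * s t"
    and root1: "r1 ^ 2 = p * r1 + q" and root2: "r2 ^ 2 = p * r2 + q"
    and init0: "s 0 = \<alpha> + \<beta>" and init1: "s 1 = \<alpha> * r1 + \<beta> * r2"
  shows "s t = \<alpha> * r1 ^ t + \<beta> * r2 ^ t"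
proof -
  have "s t = \<alpha> * r1 ^ t + \<beta> * r2 ^ t \<and> s (Suc t) = \<alpha> * r1 ^ Suc t + \<beta> * r2 ^ Suc t"
  proof (induction t)
    case 0
    then show ?case using init0 init1 by simp
  next
    case (Suc t)
    have "s (Suc (Suc t)) = p * (\<alpha> * r1 ^ Suc t + \<beta> * r2 ^ Suc t) + q * (\<alpha> * r1 ^ t + \<beta> * r2 ^ t)"
      using rec Suc by simp
    also have "\<dots> = \<alpha> * r1 ^ t * (p * r1 + q) + \<beta> * r2 ^ t * (p * r2 + q)"
      by (simp add: algebra_simps)
    also have "\<dots> = \<alpha> * r1 ^ Suc (Suc t) + \<beta> * r2 ^ Suc (Suc t)"
      unfolding root1[symmetric] root2[symmetric] by (simp add: power2_eq_square algebra_simps)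
    finally show ?case using Suc by simp
  qed
  then show ?thesis by simp
qed

lemma all_less_4_conv: "(\<forall>i. Suc i < 4 \<longrightarrow> P i) \<longleftrightarrow> P 0 \<and> P 1 \<and> P 2"
  by (auto simp: less_Suc_eq numeral_eq_Suc)

lemma ck_vertices_4_iff:
  "xs \<in> ck_vertices d 4 \<longleftrightarrow> (\<exists>a b c e. xs = [a, b, c, e] \<and> a \<le> d \<and> b \<le> d \<and> c \<le> d \<and> e \<le> d
     \<and> a \<noteq> b \<and> b \<noteq> c \<and> c \<noteq> e \<and> e \<noteq> a)"
  unfolding ck_vertices_def all_less_4_conv
  by (auto simp: length_Suc_conv numeral_eq_Suc)

lemma cyclic_kautz_4_arc_iff:
  assumes "[a, b, c, e] \<in> ck_vertices d 4"
  shows "(Base [a, b, c, e], w) \<in> snd (cyclic_kautz d 4)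
    \<longleftrightarrow> (\<exists>x. w = Base [b, c, e, x] \<and> x \<le> d \<and> x \<noteq> e \<and> x \<noteq> b)"
  using assms unfolding cyclic_kautz_def all_less_4_conv ck_vertices_4_iff
  by (auto simp: length_Suc_conv numeral_eq_Suc)

definition ck4_type :: "nat list vert \<Rightarrow> bool" where
  "ck4_type v = (case v of Base xs \<Rightarrow> xs ! 1 = xs ! 3 | Arc _ _ \<Rightarrow> False)"

definition ck4_type_matrix :: "nat \<Rightarrow> bool \<Rightarrow> bool \<Rightarrow> nat" where
  "ck4_type_matrix d q p = (if p then 1 else if q then d - 1 else d - 2)"

lemma finite_ck_vertices: "finite (ck_vertices d l)"
proof -
  have "ck_vertices d l \<subseteq> {xs. set xs \<subseteq> {0..d} \<and> length xs = l}"
    unfolding ck_vertices_def by auto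
  then show ?thesis using finite_lists_length_eq[of "{0..d}" l] finite_subset by blast
qed

lemma out_type_regular_cyclic_kautz_4:
  "out_type_regular ck4_type (ck4_type_matrix d) (cyclic_kautz d 4)"
proof -
  have out: "card {w. (Base [a, b, c, e], w) \<in> snd (cyclic_kautz d 4) \<and> ck4_type w = p}
      = ck4_type_matrix d (b = e) p" if v: "[a, b, c, e] \<in> ck_vertices d 4" for a b c e p
  proof -
    note arc = cyclic_kautz_4_arc_iff[OF v]
    from v have abce: "a \<le> d" "b \<le> d" "c \<le> d" "e \<le> d" "a \<noteq> b" "b \<noteq> c" "c \<noteq> e" "e \<noteq> a"
      unfolding ck_vertices_4_iff by auto
    show ?thesis
    proof (cases p)
      case True
      then have "{w. (Base [a, b, c, e], w) \<in> snd (cyclic_kautz d 4) \<and> ck4_type w = p}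
          = {Base [b, c, e, c]}"
        unfolding arc ck4_type_def using abce by auto
      then show ?thesis using True by (simp add: ck4_type_matrix_def)
    next
      case False
      then have "{w. (Base [a, b, c, e], w) \<in> snd (cyclic_kautz d 4) \<and> ck4_type w = p}
          = (\<lambda>x. Base [b, c, e, x]) ` ({0..d} - {b, c, e})"
        unfolding arc ck4_type_def using abce by auto
      moreover have "card ({0..d} - {b, c, e}) = d + 1 - card {b, c, e}"
        using abce by (subst card_Diff_subset) auto
      moreover have "card {b, c, e} = (if b = e then 2 else 3)"
        using abce by (auto simp: insert_commute)
      ultimately show ?thesis
        using False by (auto simp: card_image inj_on_def ck4_type_matrix_def)
    qed
  qed
  show ?thesis
    unfolding out_type_regular_def
  proof (intro conjI ballI allI)
    show "finite (fst (cyclic_kautz d 4))"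
      by (simp add: cyclic_kautz_def finite_ck_vertices)
    show "snd (cyclic_kautz d 4) \<subseteq> fst (cyclic_kautz d 4) \<times> fst (cyclic_kautz d 4)"
      unfolding cyclic_kautz_def by auto
  next
    fix v p assume "v \<in> fst (cyclic_kautz d 4)"
    then obtain xs where "v = Base xs" and xs: "xs \<in> ck_vertices d 4"
      unfolding cyclic_kautz_def by auto
    moreover obtain a b c e where "xs = [a, b, c, e]"
      using xs unfolding ck_vertices_4_iff by auto
    ultimately show "card {w. (v, w) \<in> snd (cyclic_kautz d 4) \<and> ck4_type w = p}
        = ck4_type_matrix d (ck4_type v) p"
      using out by (simp add: ck4_type_def)
  qed
qed

lemma card_ck4_type_true:
  "type_count ck4_type (fst (cyclic_kautz d 4)) True = (d + 1) * d * d"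
proof -
  let ?S = "SIGMA b:{0..d}. ({0..d} - {b}) \<times> ({0..d} - {b})"
  have "{v \<in> fst (cyclic_kautz d 4). ck4_type v = True} = Base ` (\<lambda>(b, a, c). [a, b, c, b]) ` ?S"
  proof (intro equalityI subsetI)
    fix v assume "v \<in> {v \<in> fst (cyclic_kautz d 4). ck4_type v = True}"
    then obtain xs where v: "v = Base xs" "xs \<in> ck_vertices d 4" "xs ! 1 = xs ! 3"
      unfolding cyclic_kautz_def ck4_type_def by auto
    then obtain a b c e where "xs = [a, b, c, e]" "a \<le> d" "b \<le> d" "c \<le> d" "a \<noteq> b" "b \<noteq> c"
      unfolding ck_vertices_4_iff by blast
    then show "v \<in> Base ` (\<lambda>(b, a, c). [a, b, c, b]) ` ?S"
      using v by (intro image_eqI[of _ _ xs] image_eqI[of _ _ "(b, a, c)"]) auto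
  qed (auto simp: cyclic_kautz_def ck4_type_def ck_vertices_4_iff)
  then have "type_count ck4_type (fst (cyclic_kautz d 4)) True = card ?S"
    by (simp add: type_count_def card_image inj_on_def)
  also have "\<dots> = (\<Sum>b\<in>{0..d}. d * d)"
    by (simp add: card_SigmaI card_cartesian_product card_Diff_singleton)
  also have "\<dots> = (d + 1) * (d * d)"
    by simp
  finally show ?thesis by (simp only: mult.assoc)
qed

lemma card_ck4_type_false:
  "type_count ck4_type (fst (cyclic_kautz d 4)) False = (d + 1) * d * (d - 1) * (d - 1)"
proof -
  let ?S = "SIGMA b:{0..d}. SIGMA e:{0..d} - {b}. ({0..d} - {b, e}) \<times> ({0..d} - {b, e})"
  have "{v \<in> fst (cyclic_kautz d 4). ck4_type v = False} = Base ` (\<lambda>(b, e, a, c). [a, b, c, e]) ` ?S"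
  proof (intro equalityI subsetI)
    fix v assume "v \<in> {v \<in> fst (cyclic_kautz d 4). ck4_type v = False}"
    then obtain xs where v: "v = Base xs" "xs \<in> ck_vertices d 4" "xs ! 1 \<noteq> xs ! 3"
      unfolding cyclic_kautz_def ck4_type_def by auto
    then obtain a b c e where "xs = [a, b, c, e]" "a \<le> d" "b \<le> d" "c \<le> d" "e \<le> d"
        "a \<noteq> b" "b \<noteq> c" "c \<noteq> e" "e \<noteq> a"
      unfolding ck_vertices_4_iff by blast
    then show "v \<in> Base ` (\<lambda>(b, e, a, c). [a, b, c, e]) ` ?S"
      using v by (intro image_eqI[of _ _ xs] image_eqI[of _ _ "(b, e, a, c)"]) auto
  qed (auto simp: cyclic_kautz_def ck4_type_def ck_vertices_4_iff)
  then have "type_count ck4_type (fst (cyclic_kautz d 4)) False = card ?S"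
    by (simp add: type_count_def card_image inj_on_def)
  also have "\<dots> = (\<Sum>b\<in>{0..d}. \<Sum>e\<in>{0..d} - {b}. (d - 1) * (d - 1))"
    by (auto simp: card_SigmaI card_cartesian_product card_Diff_subset intro!: sum.cong)
  also have "\<dots> = (\<Sum>b\<in>{0..d}. d * ((d - 1) * (d - 1)))"
    by (simp add: card_Diff_singleton)
  also have "\<dots> = (d + 1) * (d * ((d - 1) * (d - 1)))"
    by simp
  finally show ?thesis by (simp only: mult.assoc)
qed

definition ck4_counts :: "nat \<Rightarrow> nat \<Rightarrow> bool \<Rightarrow> nat" where
  "ck4_counts d t = (type_step (ck4_type_matrix d) ^^ t) (type_count ck4_type (fst (cyclic_kautz d 4)))"

lemma ck4_counts_0:
  "ck4_counts d 0 True = (d + 1) * d * d"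
  "ck4_counts d 0 False = (d + 1) * d * (d - 1) * (d - 1)"
  by (simp_all add: ck4_counts_def card_ck4_type_true card_ck4_type_false)

lemma ck4_counts_Suc:
  "ck4_counts d (Suc t) True = ck4_counts d t True + ck4_counts d t False"
  "ck4_counts d (Suc t) False = (d - 1) * ck4_counts d t True + (d - 2) * ck4_counts d t False"
  by (simp_all add: ck4_counts_def type_step_def UNIV_bool ck4_type_matrix_def)

lemma N_ck4_eq_ck4_counts: "N_ck4 d t = ck4_counts d t True + ck4_counts d t False"
  using card_iterated_line_digraph[OF out_type_regular_cyclic_kautz_4[of d], of t]
  by (simp add: N_ck4_def ck4_counts_def UNIV_bool add.commute)

lemma N_ck4_recurrence:
  assumes "d \<ge> 1"
  shows "N_ck4 d (Suc (Suc t)) = (d - 1) * N_ck4 d (Suc t) + N_ck4 d t"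
proof (cases "d = 1") \<comment> \<open>separately, since d - 2 truncates to 0 there\<close>
  case True
  then show ?thesis by (simp add: N_ck4_eq_ck4_counts ck4_counts_Suc)
next
  case False
  then obtain k where "d = Suc (Suc k)"
    using assms by (metis One_nat_def Suc_le_D le_antisym not_less_eq_eq)
  then show ?thesis by (simp add: N_ck4_eq_ck4_counts ck4_counts_Suc algebra_simps)
qed

lemma N_ck4_0_real:
  "real (N_ck4 d 0) = real d * (real d + 1) * (real d ^ 2 - real d + 1)"
  by (cases d) (simp_all add: N_ck4_eq_ck4_counts ck4_counts_0 algebra_simps power2_eq_square)

lemma N_ck4_1_real:
  assumes "d \<ge> 1"
  shows "real (N_ck4 d 1) = real d * (real d + 1) * (real d ^ 3 - 2 * real d ^ 2 + 3 * real d - 1)"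
proof (cases "d = 1")
  case True
  then show ?thesis by (simp add: N_ck4_eq_ck4_counts ck4_counts_Suc ck4_counts_0)
next
  case False
  then obtain k where "d = Suc (Suc k)"
    using assms by (metis One_nat_def Suc_le_D le_antisym not_less_eq_eq)
  then show ?thesis
    by (simp add: N_ck4_eq_ck4_counts ck4_counts_Suc ck4_counts_0 algebra_simps
        power2_eq_square power3_eq_cube)
qed

lemma N_ck4_closed_form:
  fixes d :: nat
  assumes d: "d \<ge> 1"
  defines "x \<equiv> real d"
  defines "S \<equiv> sqrt (x ^ 2 - 2 * x + 5)"
  shows "real (N_ck4 d t)
      = (1/2 * x * (x + 1) * (x ^ 2 - x + 1 + (x ^ 3 - 2 * x ^ 2 + 4 * x - 1) / S)) * ((x - 1 + S) / 2) ^ t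
      + (1/2 * x * (x + 1) * (x ^ 2 - x + 1 - (x ^ 3 - 2 * x ^ 2 + 4 * x - 1) / S)) * ((x - 1 - S) / 2) ^ t"
proof (rule second_order_recurrence_closed_form[where p = "x - 1" and q = 1])
  have "x ^ 2 - 2 * x + 5 = (x - 1) ^ 2 + 4"
    by (simp add: power2_eq_square algebra_simps)
  then have "x ^ 2 - 2 * x + 5 > 0"
    by (metis add_nonneg_pos zero_le_power2 zero_less_numeral)
  then have S_sq: "S ^ 2 = x ^ 2 - 2 * x + 5" and S_nz: "S \<noteq> 0"
    by (simp_all add: S_def)
  show "real (N_ck4 d (Suc (Suc t))) = (x - 1) * real (N_ck4 d (Suc t)) + 1 * real (N_ck4 d t)" for t
    using N_ck4_recurrence[OF d] d by (simp add: x_def of_nat_diff)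
  show "((x - 1 + S) / 2) ^ 2 = (x - 1) * ((x - 1 + S) / 2) + 1"
    "((x - 1 - S) / 2) ^ 2 = (x - 1) * ((x - 1 - S) / 2) + 1"
    using S_sq by (simp_all add: field_simps power2_eq_square)
  show "real (N_ck4 d 0) = 1/2 * x * (x + 1) * (x ^ 2 - x + 1 + (x ^ 3 - 2 * x ^ 2 + 4 * x - 1) / S)
      + 1/2 * x * (x + 1) * (x ^ 2 - x + 1 - (x ^ 3 - 2 * x ^ 2 + 4 * x - 1) / S)"
    using S_nz by (simp add: N_ck4_0_real x_def field_simps power2_eq_square)
  have "1/2 * x * (x + 1) * (x ^ 2 - x + 1 + (x ^ 3 - 2 * x ^ 2 + 4 * x - 1) / S) * ((x - 1 + S) / 2)
      + 1/2 * x * (x + 1) * (x ^ 2 - x + 1 - (x ^ 3 - 2 * x ^ 2 + 4 * x - 1) / S) * ((x - 1 - S) / 2)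
      = x * (x + 1) * (x ^ 3 - 2 * x ^ 2 + 3 * x - 1)"
    using S_nz by (simp add: field_simps power2_eq_square power3_eq_cube)
  then show "real (N_ck4 d 1)
      = 1/2 * x * (x + 1) * (x ^ 2 - x + 1 + (x ^ 3 - 2 * x ^ 2 + 4 * x - 1) / S) * ((x - 1 + S) / 2)
      + 1/2 * x * (x + 1) * (x ^ 2 - x + 1 - (x ^ 3 - 2 * x ^ 2 + 4 * x - 1) / S) * ((x - 1 - S) / 2)"
    using N_ck4_1_real[OF d] by (simp add: x_def)
qed

lemma N_ck4_2_eqs:
  "N_ck4 2 0 = 18" "N_ck4 2 1 = 30" "t \<ge> 2 \<Longrightarrow> N_ck4 2 t = N_ck4 2 (t - 1) + N_ck4 2 (t - 2)"
proof -
  show "N_ck4 2 0 = 18" "N_ck4 2 1 = 30"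
    by (simp_all add: N_ck4_eq_ck4_counts ck4_counts_Suc ck4_counts_0)
  assume "t \<ge> 2"
  then obtain m where "t = Suc (Suc m)"
    by (metis add_2_eq_Suc le_Suc_ex)
  then show "N_ck4 2 t = N_ck4 2 (t - 1) + N_ck4 2 (t - 2)"
    using N_ck4_recurrence[of 2 m] by simp
qed

theorem proposition3:
  fixes d :: nat
  assumes "d \<ge> 1"
  shows "(\<forall>t. real (N_ck4 d t) =
            (1/2 * real d * (real d + 1) * (real d ^ 2 - real d + 1
               + (real d ^ 3 - 2 * real d ^ 2 + 4 * real d - 1) / sqrt (real d ^ 2 - 2 * real d + 5)))
              * ((real d - 1 + sqrt (real d ^ 2 - 2 * real d + 5)) / 2) ^ t
          + (1/2 * real d * (real d + 1) * (real d ^ 2 - real d + 1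
               - (real d ^ 3 - 2 * real d ^ 2 + 4 * real d - 1) / sqrt (real d ^ 2 - 2 * real d + 5)))
              * ((real d - 1 - sqrt (real d ^ 2 - 2 * real d + 5)) / 2) ^ t)
       \<and> (d = 2 \<longrightarrow> N_ck4 d 0 = 18 \<and> N_ck4 d 1 = 30
            \<and> (\<forall>t\<ge>2. N_ck4 d t = N_ck4 d (t - 1) + N_ck4 d (t - 2)))"
  using N_ck4_closed_form[OF assms] N_ck4_2_eqs by blast

end
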